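(* Let $\Delta$ be a simplicial complex of subsets of $\{1,\dots,n\}$. Then $K_\Delta=\ker\tau_\Delta$ is generated by the following linear forms: for every pair $\mathscr J,\mathcal K\in\Delta$ and every choice of values $c_j\in\{1,\dots,a_j\}$ for $j\in\mathscr J\cap\mathcal K$, the form $$\sum_{\sigma}X_\sigma-\sum_{\rho}X_\rho,$$ where $\sigma$ ranges over tuples with $\sigma_j=c_j$ for $j\in\mathscr J\cap\mathcal K$, $\sigma_j\in\{1,\dots,a_j\}$ arbitrary for $j\in\mathscr J\setminus\mathcal K$, and $\sigma_j=\bullet$ for $j\notin\mathscr J$; and $\rho$ ranges over tuples with $\rho_j=c_j$ for $j\in\mathscr J\cap\mathcal K$, $\rho_j\in\{1,\dots,a_j\}$ arbitrary for $j\in\mathcal K\setminus\mathscr J$, and $\rho_j=\bullet$ for $j\notin\mathcal K$.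
   Context: $\mathbb K$ is a field, $a_1,\dots,a_n$ positive integers, $R=\mathbb K[x_{i_1,\dots,i_n}:1\le i_j\le a_j]$. For a tuple $\sigma$ with $\sigma_j\in\{1,\dots,a_j\}\cup\{+\}$, $x_\sigma$ is the sum of all $x_{i_1,\dots,i_n}$ with $i_j=\sigma_j$ whenever $\sigma_j\ne+$. A simplicial complex $\Delta$ is a nonempty collection of subsets of $\{1,\dots,n\}$ closed under subsets. $S_\Delta$ is the polynomial ring over $\mathbb K$ in variables $X_\sigma$, one for each tuple $\sigma$ with $\sigma_j\in\{1,\dots,a_j\}\cup\{\bullet\}$ and $\{j:\sigma_j\ne\bullet\}\in\Delta$. $\tau_\Delta:S_\Delta\to R$ sends $X_\sigma$ to $x_{\sigma''}$, where $\sigma''$ is $\sigma$ with each $\bullet$ replaced by $+$, and $K_\Delta=\ker\tau_\Delta$. *)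

theory Defs
  imports Main "HOL-Library.Poly_Mapping"
begin

text \<open>Multivariate polynomials over 'k in variables of type 'v are modelled as
  (('v =>0 nat) =>0 'k), with the convolution ring structure of Poly_Mapping.
  Coordinates are indexed by j in {1..n}. A multi-index (i_1,...,i_n) is a function
  nat \<Rightarrow> nat, zero outside {1..n}. A tuple sigma with entries in {1..a_j} or a
  wildcard (bullet / +) is a function nat \<Rightarrow> nat option, None = wildcard,
  None outside {1..n}.\<close>

definition var :: "'v \<Rightarrow> (('v \<Rightarrow>\<^sub>0 nat) \<Rightarrow>\<^sub>0 'k::comm_ring_1)" where
  "var v = Poly_Mapping.single (Poly_Mapping.single v 1) 1"

definition box :: "nat \<Rightarrow> (nat \<Rightarrow> nat) \<Rightarrow> (nat \<Rightarrow> nat) set" where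
  "box n a = {i. (\<forall>j\<in>{1..n}. i j \<in> {1..a j}) \<and> (\<forall>j. j \<notin> {1..n} \<longrightarrow> i j = 0)}"

definition xsum :: "nat \<Rightarrow> (nat \<Rightarrow> nat) \<Rightarrow> (nat \<Rightarrow> nat option)
    \<Rightarrow> (((nat \<Rightarrow> nat) \<Rightarrow>\<^sub>0 nat) \<Rightarrow>\<^sub>0 'k::comm_ring_1)" where
  "xsum n a \<sigma> = (\<Sum>i\<in>{i\<in>box n a. \<forall>j c. \<sigma> j = Some c \<longrightarrow> i j = c}. var i)"

definition Svars :: "nat \<Rightarrow> (nat \<Rightarrow> nat) \<Rightarrow> nat set set \<Rightarrow> (nat \<Rightarrow> nat option) set" where
  "Svars n a \<Delta> = {\<sigma>. (\<forall>j\<in>{1..n}. \<sigma> j = None \<or> \<sigma> j \<in> Some ` {1..a j})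
      \<and> (\<forall>j. j \<notin> {1..n} \<longrightarrow> \<sigma> j = None) \<and> {j. \<sigma> j \<noteq> None} \<in> \<Delta>}"

text \<open>S_Delta as the subring of polynomials only involving the variables X_sigma, sigma in Svars.\<close>
definition S_ring :: "nat \<Rightarrow> (nat \<Rightarrow> nat) \<Rightarrow> nat set set
    \<Rightarrow> (((nat \<Rightarrow> nat option) \<Rightarrow>\<^sub>0 nat) \<Rightarrow>\<^sub>0 'k::comm_ring_1) set" where
  "S_ring n a \<Delta> = {p. \<forall>m\<in>Poly_Mapping.keys p. Poly_Mapping.keys m \<subseteq> Svars n a \<Delta>}"

definition tau :: "nat \<Rightarrow> (nat \<Rightarrow> nat) \<Rightarrow> (((nat \<Rightarrow> nat option) \<Rightarrow>\<^sub>0 nat) \<Rightarrow>\<^sub>0 'k::comm_ring_1)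
    \<Rightarrow> (((nat \<Rightarrow> nat) \<Rightarrow>\<^sub>0 nat) \<Rightarrow>\<^sub>0 'k)" where
  "tau n a p = (\<Sum>m\<in>Poly_Mapping.keys p.
      Poly_Mapping.single 0 (Poly_Mapping.lookup p m) *
      (\<Prod>v\<in>Poly_Mapping.keys m. xsum n a v ^ Poly_Mapping.lookup m v))"

definition ideal_gen :: "'r::comm_ring_1 set \<Rightarrow> 'r set \<Rightarrow> 'r set" where
  "ideal_gen A G = {\<Sum>g\<in>F. h g * g | F h. finite F \<and> F \<subseteq> G \<and> (\<forall>g\<in>F. h g \<in> A)}"

definition simplicial_complex :: "nat \<Rightarrow> nat set set \<Rightarrow> bool" where
  "simplicial_complex n \<Delta> \<longleftrightarrow> \<Delta> \<noteq> {} \<and> (\<forall>F\<in>\<Delta>. F \<subseteq> {1..n}) \<and> (\<forall>F\<in>\<Delta>. \<forall>G. G \<subseteq> F \<longrightarrow> G \<in> \<Delta>)"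

definition tuples_JK :: "nat \<Rightarrow> (nat \<Rightarrow> nat) \<Rightarrow> nat set set \<Rightarrow> nat set \<Rightarrow> nat set
    \<Rightarrow> (nat \<Rightarrow> nat) \<Rightarrow> (nat \<Rightarrow> nat option) set" where
  "tuples_JK n a \<Delta> J K c = {\<sigma>\<in>Svars n a \<Delta>. (\<forall>j\<in>J \<inter> K. \<sigma> j = Some (c j))
      \<and> (\<forall>j\<in>J - K. \<sigma> j \<noteq> None) \<and> (\<forall>j. j \<notin> J \<longrightarrow> \<sigma> j = None)}"

definition gen_form :: "nat \<Rightarrow> (nat \<Rightarrow> nat) \<Rightarrow> nat set set \<Rightarrow> nat set \<Rightarrow> nat set
    \<Rightarrow> (nat \<Rightarrow> nat) \<Rightarrow> (((nat \<Rightarrow> nat option) \<Rightarrow>\<^sub>0 nat) \<Rightarrow>\<^sub>0 'k::comm_ring_1)" where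
  "gen_form n a \<Delta> J K c =
     (\<Sum>\<sigma>\<in>tuples_JK n a \<Delta> J K c. var \<sigma>) - (\<Sum>\<rho>\<in>tuples_JK n a \<Delta> K J c. var \<rho>)"

definition generators :: "nat \<Rightarrow> (nat \<Rightarrow> nat) \<Rightarrow> nat set set
    \<Rightarrow> (((nat \<Rightarrow> nat option) \<Rightarrow>\<^sub>0 nat) \<Rightarrow>\<^sub>0 'k::comm_ring_1) set" where
  "generators n a \<Delta> = {gen_form n a \<Delta> J K c | J K c. J \<in> \<Delta> \<and> K \<in> \<Delta>
      \<and> (\<forall>j\<in>J \<inter> K. c j \<in> {1..a j})}"

end

theory Submission
  imports Defs "HOL-Library.FuncSet"
begin

(* Call sigma good if no entry
   sigma_j equals a_j. In each coordinate, e_1, ..., e_(a_j - 1) and e_1 + ... + e_(a_j) form a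
   basis of K^(a_j); taking tensor products, the x_sigma'' with sigma good form a basis of the
   linear forms of R, so some substitution phi from R to S_Delta maps x_sigma'' to X_sigma for
   every good sigma.
   Let I be the ideal of the generators, which lie in the kernel of tau. Then
   X_sigma - phi (tau X_sigma) lies in I for every sigma: it is 0 for good sigma, and if
   sigma_j = a_j, the generator for J = supp sigma and K = J - {j} expresses X_sigma modulo I
   through tuples with fewer entries equal to their maximum. Since phi o tau is a ring
   homomorphism, every p in S_Delta is congruent to phi (tau p) modulo I, hence lies in I when
   tau p = 0. The argument works over any commutative ring. *)

section \<open>Substitution homomorphisms\<close>

definition monom_subst :: "('v \<Rightarrow> ('w \<Rightarrow>\<^sub>0 nat) \<Rightarrow>\<^sub>0 'k::comm_ring_1)
    \<Rightarrow> ('v \<Rightarrow>\<^sub>0 nat) \<Rightarrow> ('w \<Rightarrow>\<^sub>0 nat) \<Rightarrow>\<^sub>0 'k" where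
  "monom_subst f m = (\<Prod>v\<in>Poly_Mapping.keys m. f v ^ Poly_Mapping.lookup m v)"

definition poly_subst :: "('v \<Rightarrow> ('w \<Rightarrow>\<^sub>0 nat) \<Rightarrow>\<^sub>0 'k::comm_ring_1)
    \<Rightarrow> (('v \<Rightarrow>\<^sub>0 nat) \<Rightarrow>\<^sub>0 'k) \<Rightarrow> ('w \<Rightarrow>\<^sub>0 nat) \<Rightarrow>\<^sub>0 'k" where
  "poly_subst f p =
     (\<Sum>m\<in>Poly_Mapping.keys p. Poly_Mapping.single 0 (Poly_Mapping.lookup p m) * monom_subst f m)"

lemma tau_eq_poly_subst: "tau n a = poly_subst (xsum n a)"
  by (simp add: fun_eq_iff tau_def poly_subst_def monom_subst_def)

lemma monom_subst_eq_prod: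
  assumes "finite S" "Poly_Mapping.keys m \<subseteq> S"
  shows "monom_subst f m = (\<Prod>v\<in>S. f v ^ Poly_Mapping.lookup m v)"
  unfolding monom_subst_def
  by (rule prod.mono_neutral_left) (use assms in \<open>auto simp: in_keys_iff\<close>)

lemma monom_subst_zero [simp]: "monom_subst f 0 = 1"
  by (simp add: monom_subst_def)

lemma monom_subst_add: "monom_subst f (m1 + m2) = monom_subst f m1 * monom_subst f m2"
proof -
  let ?S = "Poly_Mapping.keys m1 \<union> Poly_Mapping.keys m2"
  have "monom_subst f (m1 + m2) = (\<Prod>v\<in>?S. f v ^ Poly_Mapping.lookup (m1 + m2) v)"
    using keys_add[of m1 m2] by (intro monom_subst_eq_prod) auto
  also have "\<dots> = (\<Prod>v\<in>?S. f v ^ Poly_Mapping.lookup m1 v) * (\<Prod>v\<in>?S. f v ^ Poly_Mapping.lookup m2 v)"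
    by (simp add: lookup_add power_add prod.distrib)
  also have "\<dots> = monom_subst f m1 * monom_subst f m2"
    by (subst (1 2) monom_subst_eq_prod[of ?S]) auto
  finally show ?thesis .
qed

lemma poly_subst_single:
  "poly_subst f (Poly_Mapping.single m c) = Poly_Mapping.single 0 c * monom_subst f m"
  by (simp add: poly_subst_def)

lemma poly_subst_zero [simp]: "poly_subst f 0 = 0"
  by (simp add: poly_subst_def)

lemma poly_subst_const [simp]: "poly_subst f (Poly_Mapping.single 0 c) = Poly_Mapping.single 0 c"
  by (simp add: poly_subst_single)

lemma poly_subst_var [simp]: "poly_subst f (var v) = f v"
  by (simp add: var_def poly_subst_single monom_subst_def)

lemma poly_subst_add: "poly_subst f (p + q) = poly_subst f p + poly_subst f q"
  unfolding poly_subst_def by (rule setsum_keys_plus_distrib) (simp_all add: single_add distrib_right)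

lemma poly_subst_uminus: "poly_subst f (- p) = - poly_subst f p"
  using poly_subst_add[of f p "- p"] by (simp add: add_eq_0_iff)

lemma poly_subst_diff: "poly_subst f (p - q) = poly_subst f p - poly_subst f q"
  using poly_subst_add[of f p "- q"] by (simp add: poly_subst_uminus)

lemma poly_subst_sum: "poly_subst f (\<Sum>x\<in>A. g x) = (\<Sum>x\<in>A. poly_subst f (g x))"
  by (induction A rule: infinite_finite_induct) (auto simp: poly_subst_add)

lemma poly_expansion: "p = (\<Sum>m\<in>Poly_Mapping.keys p. Poly_Mapping.single m (Poly_Mapping.lookup p m))"
  by (rule poly_mapping_eqI) (simp add: lookup_sum lookup_single when_def in_keys_iff)

lemma poly_subst_mult: "poly_subst f (p * q) = poly_subst f p * poly_subst f q"
proof -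
  let ?t = "\<lambda>p m. Poly_Mapping.single m (Poly_Mapping.lookup p m)"
  have "p * q = (\<Sum>m1\<in>Poly_Mapping.keys p. \<Sum>m2\<in>Poly_Mapping.keys q. ?t p m1 * ?t q m2)"
    by (subst (1) poly_expansion, subst (2) poly_expansion) (simp add: sum_product)
  moreover have "poly_subst f (?t p m1 * ?t q m2) = poly_subst f (?t p m1) * poly_subst f (?t q m2)" for m1 m2
    by (simp only: mult_single poly_subst_single monom_subst_add mult_ac add_0)
  ultimately have "poly_subst f (p * q) = (\<Sum>m1\<in>Poly_Mapping.keys p. poly_subst f (?t p m1)) *
      (\<Sum>m2\<in>Poly_Mapping.keys q. poly_subst f (?t q m2))"
    by (simp add: poly_subst_sum sum_product)
  then show ?thesis
    by (simp only: poly_subst_single poly_subst_def[of f p] poly_subst_def[of f q])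
qed

lemma poly_subst_power: "poly_subst f (p ^ k) = poly_subst f p ^ k"
  by (induction k) (auto simp: poly_subst_mult simp flip: single_one)

lemma poly_subst_prod: "poly_subst f (\<Prod>x\<in>A. g x) = (\<Prod>x\<in>A. poly_subst f (g x))"
  by (induction A rule: infinite_finite_induct) (auto simp: poly_subst_mult simp flip: single_one)

lemma poly_subst_poly_subst:
  "poly_subst f (poly_subst g p) = poly_subst (\<lambda>v. poly_subst f (g v)) p"
  unfolding poly_subst_def[of g p] poly_subst_def[of _ p]
  by (simp add: poly_subst_sum poly_subst_mult poly_subst_prod poly_subst_power monom_subst_def)

lemma single_eq_prod_var_power:
  "(Poly_Mapping.single m c :: _ \<Rightarrow>\<^sub>0 'k::comm_ring_1)
     = Poly_Mapping.single 0 c * (\<Prod>v\<in>Poly_Mapping.keys m. var v ^ Poly_Mapping.lookup m v)"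
proof -
  have var_power: "var v ^ k = Poly_Mapping.single (Poly_Mapping.single v k) 1" for v k
    by (induction k) (simp_all add: var_def mult_single flip: single_add)
  have "Poly_Mapping.single (\<Sum>v\<in>V. g v) (1::'k) = (\<Prod>v\<in>V. Poly_Mapping.single (g v) 1)" for g V
  proof (induction V rule: infinite_finite_induct)
    case (insert v V)
    then show ?case by (simp add: mult_single flip: insert.IH)
  qed simp_all
  then have "Poly_Mapping.single m (1::'k) = (\<Prod>v\<in>Poly_Mapping.keys m. var v ^ Poly_Mapping.lookup m v)"
    by (subst poly_expansion) (simp add: var_power)
  then show ?thesis
    by (metis mult.right_neutral mult_single add_0)
qed

section \<open>Ideals generated inside a subring\<close>

lemma zero_in_ideal_gen [simp]: "0 \<in> ideal_gen A G"
  unfolding ideal_gen_def by (rule CollectI, rule exI[of _ "{}"]) auto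

locale subring_set =
  fixes A :: "'r::comm_ring_1 set"
  assumes one_mem: "1 \<in> A"
    and add_mem: "x \<in> A \<Longrightarrow> y \<in> A \<Longrightarrow> x + y \<in> A"
    and uminus_mem: "x \<in> A \<Longrightarrow> - x \<in> A"
    and mult_mem: "x \<in> A \<Longrightarrow> y \<in> A \<Longrightarrow> x * y \<in> A"
begin

lemma zero_mem: "0 \<in> A"
  using add_mem[OF one_mem uminus_mem[OF one_mem]] by simp

lemma diff_mem: "x \<in> A \<Longrightarrow> y \<in> A \<Longrightarrow> x - y \<in> A"
  using add_mem[of x "- y"] uminus_mem[of y] by simp

lemma sum_mem: "(\<And>x. x \<in> S \<Longrightarrow> f x \<in> A) \<Longrightarrow> (\<Sum>x\<in>S. f x) \<in> A"
  by (induction S rule: infinite_finite_induct) (auto simp: zero_mem add_mem)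

lemma prod_mem: "(\<And>x. x \<in> S \<Longrightarrow> f x \<in> A) \<Longrightarrow> (\<Prod>x\<in>S. f x) \<in> A"
  by (induction S rule: infinite_finite_induct) (auto simp: one_mem mult_mem)

lemma power_mem: "x \<in> A \<Longrightarrow> x ^ k \<in> A"
  by (induction k) (auto simp: one_mem mult_mem)

lemma generator_in_ideal_gen: "g \<in> G \<Longrightarrow> g \<in> ideal_gen A G"
  unfolding ideal_gen_def
  by (rule CollectI, rule exI[of _ "{g}"], rule exI[of _ "\<lambda>_. 1"]) (auto simp: one_mem)

lemma ideal_gen_add:
  assumes x: "x \<in> ideal_gen A G" and y: "y \<in> ideal_gen A G"
  shows "x + y \<in> ideal_gen A G"
proof -
  obtain F1 h1 where F1: "x = (\<Sum>g\<in>F1. h1 g * g)" "finite F1" "F1 \<subseteq> G" "\<forall>g\<in>F1. h1 g \<in> A"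
    using x unfolding ideal_gen_def by blast
  obtain F2 h2 where F2: "y = (\<Sum>g\<in>F2. h2 g * g)" "finite F2" "F2 \<subseteq> G" "\<forall>g\<in>F2. h2 g \<in> A"
    using y unfolding ideal_gen_def by blast
  define h where "h g = (if g \<in> F1 then h1 g else 0) + (if g \<in> F2 then h2 g else 0)" for g
  have "h g * g = (if g \<in> F1 then h1 g * g else 0) + (if g \<in> F2 then h2 g * g else 0)" for g
    by (simp add: h_def distrib_right)
  then have "(\<Sum>g\<in>F1 \<union> F2. h g * g) = (\<Sum>g\<in>F1 \<union> F2. if g \<in> F1 then h1 g * g else 0)
      + (\<Sum>g\<in>F1 \<union> F2. if g \<in> F2 then h2 g * g else 0)"
    by (simp only: sum.distrib)
  also have "\<dots> = x + y"
    using F1 F2 by (simp flip: sum.inter_restrict add: Int_absorb1)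
  finally have "x + y = (\<Sum>g\<in>F1 \<union> F2. h g * g)" ..
  moreover have "\<forall>g\<in>F1 \<union> F2. h g \<in> A"
    using F1 F2 by (auto simp: h_def zero_mem add_mem)
  ultimately show ?thesis
    using F1 F2 unfolding ideal_gen_def by blast
qed

lemma ideal_gen_mult:
  assumes s: "s \<in> A" and x: "x \<in> ideal_gen A G"
  shows "s * x \<in> ideal_gen A G"
proof -
  obtain F h where F: "x = (\<Sum>g\<in>F. h g * g)" "finite F" "F \<subseteq> G" "\<forall>g\<in>F. h g \<in> A"
    using x unfolding ideal_gen_def by blast
  have "s * x = (\<Sum>g\<in>F. (s * h g) * g)"
    using F by (simp add: sum_distrib_left mult.assoc)
  moreover have "\<forall>g\<in>F. s * h g \<in> A"
    using F s by (auto simp: mult_mem)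
  ultimately show ?thesis
    using F unfolding ideal_gen_def by (intro CollectI exI[of _ F] exI[of _ "\<lambda>g. s * h g"]) simp
qed

lemma ideal_gen_diff:
  assumes "x \<in> ideal_gen A G" "y \<in> ideal_gen A G"
  shows "x - y \<in> ideal_gen A G"
proof -
  have "x - y = x + (- 1) * y"
    by simp
  then show ?thesis
    using assms by (simp only: ideal_gen_add ideal_gen_mult uminus_mem one_mem)
qed

lemma ideal_gen_sum: "(\<And>x. x \<in> S \<Longrightarrow> f x \<in> ideal_gen A G) \<Longrightarrow> (\<Sum>x\<in>S. f x) \<in> ideal_gen A G"
  by (induction S rule: infinite_finite_induct) (auto simp: ideal_gen_add)

lemma ideal_gen_subset: "G \<subseteq> A \<Longrightarrow> ideal_gen A G \<subseteq> A"
  unfolding ideal_gen_def by (auto intro!: sum_mem mult_mem)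

lemma ideal_gen_mult_cong:
  assumes "x1 \<in> A" "y2 \<in> A" "x1 - y1 \<in> ideal_gen A G" "x2 - y2 \<in> ideal_gen A G"
  shows "x1 * x2 - y1 * y2 \<in> ideal_gen A G"
proof -
  have "x1 * x2 - y1 * y2 = x1 * (x2 - y2) + y2 * (x1 - y1)"
    by (simp add: algebra_simps)
  then show ?thesis
    using assms by (simp add: ideal_gen_add ideal_gen_mult)
qed

lemma ideal_gen_power_cong:
  assumes "x \<in> A" "y \<in> A" "x - y \<in> ideal_gen A G"
  shows "x ^ k - y ^ k \<in> ideal_gen A G"
proof (induction k)
  case (Suc k)
  then show ?case
    using ideal_gen_mult_cong[OF assms(1) power_mem[OF assms(2)] assms(3)] by simp
qed simp

lemma ideal_gen_prod_power_cong:
  assumes "\<And>v. v \<in> V \<Longrightarrow> x v \<in> A" "\<And>v. v \<in> V \<Longrightarrow> y v \<in> A"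
    and "\<And>v. v \<in> V \<Longrightarrow> x v - y v \<in> ideal_gen A G"
  shows "(\<Prod>v\<in>V. x v ^ e v) - (\<Prod>v\<in>V. y v ^ e v) \<in> ideal_gen A G"
  using assms
proof (induction V rule: infinite_finite_induct)
  case (insert v V)
  have "x v ^ e v * (\<Prod>v\<in>V. x v ^ e v) - y v ^ e v * (\<Prod>v\<in>V. y v ^ e v) \<in> ideal_gen A G"
    using insert by (intro ideal_gen_mult_cong ideal_gen_power_cong power_mem prod_mem) auto
  with insert show ?case
    by simp
qed simp_all

lemma mem_if_diff_in_ideal_gen:
  assumes "G \<subseteq> A" "x \<in> A" "x - y \<in> ideal_gen A G"
  shows "y \<in> A"
  using diff_mem[OF assms(2) subsetD[OF ideal_gen_subset[OF assms(1)] assms(3)]] by simp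

end

lemma subring_set_S_ring: "subring_set (S_ring n a D :: (_ \<Rightarrow>\<^sub>0 'k::comm_ring_1) set)"
proof
  fix p q :: "_ \<Rightarrow>\<^sub>0 'k" assume p: "p \<in> S_ring n a D" and q: "q \<in> S_ring n a D"
  show "p + q \<in> S_ring n a D"
    using p q keys_add[of p q] by (auto simp: S_ring_def)
  show "- p \<in> S_ring n a D"
    using p by (auto simp: S_ring_def)
  show "p * q \<in> S_ring n a D"
    unfolding S_ring_def
  proof (rule CollectI, rule ballI)
    fix m assume "m \<in> Poly_Mapping.keys (p * q)"
    then obtain m1 m2 where "m = m1 + m2" "m1 \<in> Poly_Mapping.keys p" "m2 \<in> Poly_Mapping.keys q"
      using keys_mult[of p q] by blast
    then show "Poly_Mapping.keys m \<subseteq> Svars n a D"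
      using keys_add[of m1 m2] p q by (auto simp: S_ring_def)
  qed
qed (simp add: S_ring_def)

interpretation S_ring: subring_set "S_ring n a D"
  by (rule subring_set_S_ring)

lemma const_in_S_ring: "Poly_Mapping.single 0 c \<in> S_ring n a D"
  by (simp add: S_ring_def)

lemma var_in_S_ring: "v \<in> Svars n a D \<Longrightarrow> var v \<in> S_ring n a D"
  by (simp add: S_ring_def var_def)

lemma S_ring_diff_poly_subst_in_ideal_gen:
  assumes p: "p \<in> S_ring n a D" and G: "G \<subseteq> S_ring n a D"
    and vars: "\<And>v. v \<in> Svars n a D \<Longrightarrow> var v - f v \<in> ideal_gen (S_ring n a D) G"
  shows "p - poly_subst f p \<in> ideal_gen (S_ring n a D) G"
proof -
  have f_mem: "f v \<in> S_ring n a D" if "v \<in> Svars n a D" for v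
    using that by (intro S_ring.mem_if_diff_in_ideal_gen[OF G var_in_S_ring vars])
  have monomial:
    "Poly_Mapping.single m c - poly_subst f (Poly_Mapping.single m c) \<in> ideal_gen (S_ring n a D) G"
    if m: "Poly_Mapping.keys m \<subseteq> Svars n a D" for m c
  proof -
    let ?P = "\<lambda>x. \<Prod>v\<in>Poly_Mapping.keys m. x v ^ Poly_Mapping.lookup m v"
    have "?P var - ?P f \<in> ideal_gen (S_ring n a D) G"
      using m by (intro S_ring.ideal_gen_prod_power_cong var_in_S_ring f_mem vars) auto
    then have "Poly_Mapping.single 0 c * (?P var - ?P f) \<in> ideal_gen (S_ring n a D) G"
      by (rule S_ring.ideal_gen_mult[OF const_in_S_ring])
    moreover have "Poly_Mapping.single m c - poly_subst f (Poly_Mapping.single m c)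
        = Poly_Mapping.single 0 c * (?P var - ?P f)"
      by (simp add: single_eq_prod_var_power[of m] poly_subst_mult poly_subst_prod poly_subst_power
          right_diff_distrib)
    ultimately show ?thesis
      by simp
  qed
  have "p - poly_subst f p = (\<Sum>m\<in>Poly_Mapping.keys p. Poly_Mapping.single m (Poly_Mapping.lookup p m)
      - poly_subst f (Poly_Mapping.single m (Poly_Mapping.lookup p m)))"
    by (subst (1 2) poly_expansion) (simp add: poly_subst_sum sum_subtractf)
  also have "\<dots> \<in> ideal_gen (S_ring n a D) G"
    using p by (intro S_ring.ideal_gen_sum monomial) (auto simp: S_ring_def)
  finally show ?thesis .
qed

section \<open>Tuples and the forms x_sigma\<close>

lemma Svars_SomeD:
  assumes "\<sigma> \<in> Svars n a D" "\<sigma> j = Some c"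
  shows "j \<in> {1..n}" "c \<in> {1..a j}"
proof -
  show j: "j \<in> {1..n}"
    using assms by (auto simp: Svars_def)
  then have "\<sigma> j = None \<or> \<sigma> j \<in> Some ` {1..a j}"
    using assms(1) by (simp add: Svars_def)
  then show "c \<in> {1..a j}"
    using assms(2) by auto
qed

lemma Svars_None_outside: "\<sigma> \<in> Svars n a D \<Longrightarrow> j \<notin> {1..n} \<Longrightarrow> \<sigma> j = None"
  by (simp add: Svars_def)

lemma finite_box: "finite (box n a)"
proof (rule finite_subset)
  show "box n a \<subseteq> {i. \<forall>j. (j \<in> {1..n} \<longrightarrow> i j \<in> (\<Union>k\<in>{1..n}. {1..a k})) \<and> (j \<notin> {1..n} \<longrightarrow> i j = 0)}"
    by (fastforce simp: box_def)
qed (intro finite_set_of_finite_funs; simp)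

lemma finite_Svars: "finite (Svars n a D)"
proof (rule finite_subset)
  show "Svars n a D \<subseteq> {\<sigma>. \<forall>j. (j \<in> {1..n} \<longrightarrow> \<sigma> j \<in> insert None (Some ` (\<Union>k\<in>{1..n}. {1..a k})))
      \<and> (j \<notin> {1..n} \<longrightarrow> \<sigma> j = None)}"
    by (fastforce simp: Svars_def)
qed (intro finite_set_of_finite_funs; simp)

lemma finite_tuples_JK: "finite (tuples_JK n a D J K c)"
  by (rule finite_subset[OF _ finite_Svars]) (auto simp: tuples_JK_def)

definition matches :: "(nat \<Rightarrow> nat) \<Rightarrow> (nat \<Rightarrow> nat option) \<Rightarrow> bool" where
  "matches i \<sigma> \<longleftrightarrow> (\<forall>j c. \<sigma> j = Some c \<longrightarrow> i j = c)"

definition tuple_on :: "nat set \<Rightarrow> (nat \<Rightarrow> nat) \<Rightarrow> nat \<Rightarrow> nat option" where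
  "tuple_on J c = (\<lambda>j. if j \<in> J then Some (c j) else None)"

lemma xsum_eq_sum_box: "xsum n a \<sigma> = (\<Sum>i\<in>box n a. if matches i \<sigma> then var i else 0)"
  unfolding xsum_def matches_def by (simp add: sum.inter_filter finite_box)

lemma matches_tuples_JK_iff:
  assumes "\<sigma> \<in> tuples_JK n a D J K c"
  shows "matches i \<sigma> \<longleftrightarrow> \<sigma> = tuple_on J i"
proof
  assume "matches i \<sigma>"
  moreover have "\<sigma> j \<noteq> None \<longleftrightarrow> j \<in> J" for j
    using assms by (cases "j \<in> K") (auto simp: tuples_JK_def)
  ultimately show "\<sigma> = tuple_on J i"
    by (fastforce simp: matches_def tuple_on_def)
qed (simp add: matches_def tuple_on_def)

lemma tuple_on_in_tuples_JK_iff: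
  assumes "simplicial_complex n D" "J \<in> D" "i \<in> box n a"
  shows "tuple_on J i \<in> tuples_JK n a D J K c \<longleftrightarrow> matches i (tuple_on (J \<inter> K) c)"
proof -
  have "J \<subseteq> {1..n}"
    using assms(1,2) by (auto simp: simplicial_complex_def)
  moreover have "{j. tuple_on J i j \<noteq> None} = J"
    by (simp add: tuple_on_def)
  ultimately have "tuple_on J i \<in> Svars n a D"
    using assms(2,3) unfolding Svars_def by (auto simp: box_def tuple_on_def)
  then show ?thesis
    by (auto simp: tuples_JK_def matches_def tuple_on_def)
qed

lemma sum_xsum_tuples_JK:
  assumes "simplicial_complex n D" "J \<in> D"
  shows "(\<Sum>\<sigma>\<in>tuples_JK n a D J K c. xsum n a \<sigma>) = xsum n a (tuple_on (J \<inter> K) c)"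
proof -
  let ?T = "tuples_JK n a D J K c"
  have "(\<Sum>\<sigma>\<in>?T. xsum n a \<sigma>) = (\<Sum>i\<in>box n a. \<Sum>\<sigma>\<in>?T. if \<sigma> = tuple_on J i then var i else 0)"
    unfolding xsum_eq_sum_box by (subst sum.swap) (simp add: matches_tuples_JK_iff cong: sum.cong)
  also have "\<dots> = (\<Sum>i\<in>box n a. if tuple_on J i \<in> ?T then var i else 0)"
    by (simp add: finite_tuples_JK)
  also have "\<dots> = xsum n a (tuple_on (J \<inter> K) c)"
    unfolding xsum_eq_sum_box using assms by (simp add: tuple_on_in_tuples_JK_iff cong: sum.cong)
  finally show ?thesis .
qed

lemma tau_gen_form:
  assumes "simplicial_complex n D" "J \<in> D" "K \<in> D"
  shows "tau n a (gen_form n a D J K c) = 0"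
  using assms by (simp add: gen_form_def tau_eq_poly_subst poly_subst_diff poly_subst_sum
      sum_xsum_tuples_JK Int_commute)

lemma generators_subset_S_ring: "generators n a D \<subseteq> S_ring n a D"
  by (auto simp: generators_def gen_form_def tuples_JK_def
      intro!: S_ring.diff_mem S_ring.sum_mem var_in_S_ring)

section \<open>A section of tau on good tuples\<close>

lemma sum_prod_funs_default_outside:
  fixes f :: "'a \<Rightarrow> 'b \<Rightarrow> 'c::comm_semiring_1"
  assumes "finite A" "\<And>j. j \<in> A \<Longrightarrow> finite (B j)"
  shows "(\<Sum>i\<in>{i. (\<forall>j\<in>A. i j \<in> B j) \<and> (\<forall>j. j \<notin> A \<longrightarrow> i j = d)}. \<Prod>j\<in>A. f j (i j))
       = (\<Prod>j\<in>A. \<Sum>t\<in>B j. f j t)"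
proof -
  have "(\<Prod>j\<in>A. \<Sum>t\<in>B j. f j t) = (\<Sum>g\<in>PiE A B. \<Prod>j\<in>A. f j (g j))"
    using assms by (rule prod_sum_PiE)
  also have "\<dots> = (\<Sum>i\<in>{i. (\<forall>j\<in>A. i j \<in> B j) \<and> (\<forall>j. j \<notin> A \<longrightarrow> i j = d)}. \<Prod>j\<in>A. f j (i j))"
    by (rule sum.reindex_bij_witness[of _ "\<lambda>i. restrict i A" "\<lambda>g j. if j \<in> A then g j else d"])
      (auto simp: PiE_def extensional_def fun_eq_iff)
  finally show ?thesis ..
qed

definition coord_values :: "(nat \<Rightarrow> nat) \<Rightarrow> (nat \<Rightarrow> nat option) \<Rightarrow> nat \<Rightarrow> nat set" where
  "coord_values a \<sigma> j = (case \<sigma> j of None \<Rightarrow> {1..a j} | Some c \<Rightarrow> {c})"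

lemma matching_box_eq:
  assumes "\<sigma> \<in> Svars n a D"
  shows "{i \<in> box n a. matches i \<sigma>}
       = {i. (\<forall>j\<in>{1..n}. i j \<in> coord_values a \<sigma> j) \<and> (\<forall>j. j \<notin> {1..n} \<longrightarrow> i j = 0)}"
proof -
  have coord: "(i j \<in> {1..a j} \<and> (\<forall>c. \<sigma> j = Some c \<longrightarrow> i j = c)) \<longleftrightarrow> i j \<in> coord_values a \<sigma> j"
    if "j \<in> {1..n}" for i j
    using assms by (cases "\<sigma> j") (auto simp: coord_values_def dest: Svars_SomeD)
  show ?thesis
    using assms by (auto simp: box_def matches_def coord[symmetric] Svars_None_outside)
qed

definition good_tuples :: "nat \<Rightarrow> (nat \<Rightarrow> nat) \<Rightarrow> nat set set \<Rightarrow> (nat \<Rightarrow> nat option) set" where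
  "good_tuples n a D = {\<tau> \<in> Svars n a D. \<forall>j. \<tau> j \<noteq> Some (a j)}"

lemma finite_good_tuples: "finite (good_tuples n a D)"
  by (rule finite_subset[OF _ finite_Svars]) (auto simp: good_tuples_def)

(* In coordinate j, phi sends the unit vector e_t to X_(Some t) for t < a_j and to
   X_None - (sum over s < a_j of X_(Some s)) for t = a_j; coord_coeff a j t u is the
   coefficient of X_u in that image. *)
definition coord_coeff :: "(nat \<Rightarrow> nat) \<Rightarrow> nat \<Rightarrow> nat \<Rightarrow> nat option \<Rightarrow> 'k::comm_ring_1" where
  "coord_coeff a j t u = (if u = None then (if t = a j then 1 else 0)
      else if t = a j then -1 else if u = Some t then 1 else 0)"

definition good_expansion :: "nat \<Rightarrow> (nat \<Rightarrow> nat) \<Rightarrow> nat set set \<Rightarrow> (nat \<Rightarrow> nat)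
    \<Rightarrow> ((nat \<Rightarrow> nat option) \<Rightarrow>\<^sub>0 nat) \<Rightarrow>\<^sub>0 'k::comm_ring_1" where
  "good_expansion n a D i =
     (\<Sum>\<tau>\<in>good_tuples n a D. Poly_Mapping.single 0 (\<Prod>j\<in>{1..n}. coord_coeff a j (i j) (\<tau> j)) * var \<tau>)"

lemma sum_coord_coeff:
  assumes "a j > 0" "\<sigma> \<in> good_tuples n a D" "\<tau> \<in> good_tuples n a D" "j \<in> {1..n}"
  shows "(\<Sum>t\<in>coord_values a \<sigma> j. coord_coeff a j t (\<tau> j) :: 'k::comm_ring_1)
       = (if \<tau> j = \<sigma> j then 1 else 0)"
proof -
  have range: "\<rho> j = None \<or> (\<exists>c\<in>{1..<a j}. \<rho> j = Some c)" if "\<rho> \<in> good_tuples n a D" for \<rho>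
    using that assms(4) by (fastforce simp: good_tuples_def Svars_def)
  show ?thesis
  proof (cases "\<sigma> j")
    case None
    consider "\<tau> j = None" | c where "\<tau> j = Some c" "c \<in> {1..<a j}"
      using range[OF assms(3)] by auto
    then show ?thesis
    proof cases
      case 1
      then show ?thesis
        using None assms(1) by (simp add: coord_values_def coord_coeff_def)
    next
      case 2
      have "(\<Sum>t\<in>{1..a j}. coord_coeff a j t (\<tau> j) :: 'k)
          = (\<Sum>t\<in>{1..a j}. (if t = c then 1 else 0) - (if t = a j then 1 else 0))"
        using 2 by (intro sum.cong) (auto simp: coord_coeff_def)
      then show ?thesis
        using None 2 by (simp add: coord_values_def sum_subtractf)
    qed
  next
    case (Some c)
    then show ?thesis
      using range[OF assms(2)] by (auto simp: coord_values_def coord_coeff_def)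
  qed
qed

lemma single_sum: "Poly_Mapping.single k (\<Sum>x\<in>A. f x) = (\<Sum>x\<in>A. Poly_Mapping.single k (f x))"
  by (induction A rule: infinite_finite_induct) (simp_all add: single_add)

lemma poly_subst_good_expansion_xsum:
  assumes apos: "\<forall>j\<in>{1..n}. a j > 0" and \<sigma>: "\<sigma> \<in> good_tuples n a D"
  shows "poly_subst (good_expansion n a D) (xsum n a \<sigma>) = (var \<sigma> :: _ \<Rightarrow>\<^sub>0 'k::comm_ring_1)"
proof -
  let ?M = "{i \<in> box n a. matches i \<sigma>}"
  have \<sigma>_Svars: "\<sigma> \<in> Svars n a D"
    using \<sigma> by (simp add: good_tuples_def)
  have coeff: "(\<Sum>i\<in>?M. \<Prod>j\<in>{1..n}. coord_coeff a j (i j) (\<tau> j) :: 'k) = (if \<tau> = \<sigma> then 1 else 0)"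
    if \<tau>: "\<tau> \<in> good_tuples n a D" for \<tau>
  proof -
    have "(\<Sum>i\<in>?M. \<Prod>j\<in>{1..n}. coord_coeff a j (i j) (\<tau> j) :: 'k)
        = (\<Prod>j\<in>{1..n}. \<Sum>t\<in>coord_values a \<sigma> j. coord_coeff a j t (\<tau> j))"
      unfolding matching_box_eq[OF \<sigma>_Svars]
      by (rule sum_prod_funs_default_outside) (auto simp: coord_values_def split: option.splits)
    also have "\<dots> = (\<Prod>j\<in>{1..n}. if \<tau> j = \<sigma> j then 1 else 0)"
      using apos \<sigma> \<tau> by (intro prod.cong) (simp_all add: sum_coord_coeff)
    also have "\<dots> = (if \<tau> = \<sigma> then 1 else 0)"
    proof -
      have "\<tau> j = \<sigma> j" if "j \<notin> {1..n}" for j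
        using that \<tau> \<sigma>_Svars by (simp add: good_tuples_def Svars_def)
      then have "\<tau> = \<sigma> \<longleftrightarrow> (\<forall>j\<in>{1..n}. \<tau> j = \<sigma> j)"
        by (metis ext)
      then show ?thesis
        using prod_zero[of "{1..n}" "\<lambda>j. if \<tau> j = \<sigma> j then 1 else 0 :: 'k"] by auto
    qed
    finally show ?thesis .
  qed
  have "poly_subst (good_expansion n a D) (xsum n a \<sigma>) = (\<Sum>i\<in>?M. good_expansion n a D i)"
    by (simp add: xsum_def poly_subst_sum matches_def)
  also have "\<dots> = (\<Sum>\<tau>\<in>good_tuples n a D.
      Poly_Mapping.single 0 (\<Sum>i\<in>?M. \<Prod>j\<in>{1..n}. coord_coeff a j (i j) (\<tau> j) :: 'k) * var \<tau>)"
    unfolding good_expansion_def by (subst sum.swap) (simp add: single_sum sum_distrib_right)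
  also have "\<dots> = (\<Sum>\<tau>\<in>good_tuples n a D. if \<tau> = \<sigma> then var \<sigma> else 0)"
    by (intro sum.cong) (simp_all only: coeff, simp_all)
  also have "\<dots> = var \<sigma>"
    using \<sigma> by (simp add: finite_good_tuples)
  finally show ?thesis .
qed

section \<open>Reduction to good tuples modulo the generators\<close>

lemma Svars_update_Some:
  assumes "\<sigma> \<in> Svars n a D" "\<sigma> j \<noteq> None" "t \<in> {1..a j}"
  shows "\<sigma>(j := Some t) \<in> Svars n a D"
proof -
  have "{k. (\<sigma>(j := Some t)) k \<noteq> None} = {k. \<sigma> k \<noteq> None}"
    using assms(2) by auto
  then show ?thesis
    using assms unfolding Svars_def by auto
qed

lemma Svars_update_None:
  assumes "simplicial_complex n D" "\<sigma> \<in> Svars n a D"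
  shows "\<sigma>(j := None) \<in> Svars n a D"
proof -
  have "{k. \<sigma> k \<noteq> None} \<in> D"
    using assms(2) by (simp add: Svars_def)
  then have "{k. (\<sigma>(j := None)) k \<noteq> None} \<in> D"
    using assms(1) unfolding simplicial_complex_def by (metis (mono_tags, lifting) Collect_mono fun_upd_apply)
  then show ?thesis
    using assms(2) unfolding Svars_def by auto
qed

lemma tuples_JK_remove_from_right:
  assumes "\<sigma> \<in> Svars n a D" "\<sigma> j \<noteq> None"
  shows "tuples_JK n a D (dom \<sigma>) (dom \<sigma> - {j}) (\<lambda>k. the (\<sigma> k))
       = (\<lambda>t. \<sigma>(j := Some t)) ` {1..a j}"
proof (intro equalityI subsetI)
  fix \<rho> assume \<rho>: "\<rho> \<in> tuples_JK n a D (dom \<sigma>) (dom \<sigma> - {j}) (\<lambda>k. the (\<sigma> k))"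
  then have "\<rho> j \<noteq> None"
    using assms(2) by (auto simp: tuples_JK_def)
  then obtain t where t: "\<rho> j = Some t"
    by blast
  then have "t \<in> {1..a j}"
    using \<rho> by (auto simp: tuples_JK_def dest: Svars_SomeD)
  moreover have "\<rho> = \<sigma>(j := Some t)"
  proof
    fix k
    show "\<rho> k = (\<sigma>(j := Some t)) k"
      using \<rho> t by (cases "k = j"; cases "\<sigma> k") (auto simp: tuples_JK_def domIff)
  qed
  ultimately show "\<rho> \<in> (\<lambda>t. \<sigma>(j := Some t)) ` {1..a j}"
    by blast
next
  fix \<rho> assume "\<rho> \<in> (\<lambda>t. \<sigma>(j := Some t)) ` {1..a j}"
  then obtain t where "t \<in> {1..a j}" "\<rho> = \<sigma>(j := Some t)"
    by blast
  then show "\<rho> \<in> tuples_JK n a D (dom \<sigma>) (dom \<sigma> - {j}) (\<lambda>k. the (\<sigma> k))"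
    using assms Svars_update_Some by (auto simp: tuples_JK_def domIff)
qed

lemma tuples_JK_remove_from_left:
  assumes "simplicial_complex n D" "\<sigma> \<in> Svars n a D"
  shows "tuples_JK n a D (dom \<sigma> - {j}) (dom \<sigma>) (\<lambda>k. the (\<sigma> k)) = {\<sigma>(j := None)}"
proof (intro equalityI subsetI)
  fix \<rho> assume "\<rho> \<in> tuples_JK n a D (dom \<sigma> - {j}) (dom \<sigma>) (\<lambda>k. the (\<sigma> k))"
  then have "\<rho> k = (\<sigma>(j := None)) k" for k
    by (cases "k = j"; cases "\<sigma> k") (auto simp: tuples_JK_def domIff)
  then have "\<rho> = \<sigma>(j := None)"
    by blast
  then show "\<rho> \<in> {\<sigma>(j := None)}"
    by simp
qed (use assms Svars_update_None in \<open>auto simp: tuples_JK_def domIff\<close>)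

lemma gen_form_remove_coordinate:
  assumes "simplicial_complex n D" "\<sigma> \<in> Svars n a D" "\<sigma> j \<noteq> None"
  shows "gen_form n a D (dom \<sigma>) (dom \<sigma> - {j}) (\<lambda>k. the (\<sigma> k))
       = (\<Sum>t\<in>{1..a j}. var (\<sigma>(j := Some t))) - var (\<sigma>(j := None))"
proof -
  have "inj_on (\<lambda>t. \<sigma>(j := Some t)) {1..a j}"
    by (rule inj_onI) (metis fun_upd_same option.inject)
  then show ?thesis
    using assms by (simp add: gen_form_def tuples_JK_remove_from_right tuples_JK_remove_from_left
        sum.reindex)
qed

lemma gen_form_remove_coordinate_in_generators:
  assumes "simplicial_complex n D" "\<sigma> \<in> Svars n a D"
  shows "gen_form n a D (dom \<sigma>) (dom \<sigma> - {j}) (\<lambda>k. the (\<sigma> k)) \<in> generators n a D"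
proof -
  have "dom \<sigma> \<in> D"
    using assms(2) by (simp add: Svars_def dom_def)
  moreover have "\<forall>k\<in>dom \<sigma> \<inter> (dom \<sigma> - {j}). the (\<sigma> k) \<in> {1..a k}"
    using assms(2) by (auto dest: Svars_SomeD)
  ultimately show ?thesis
    using assms(1) unfolding generators_def simplicial_complex_def by blast
qed

definition section_defect :: "nat \<Rightarrow> (nat \<Rightarrow> nat) \<Rightarrow> nat set set \<Rightarrow> (nat \<Rightarrow> nat option)
    \<Rightarrow> ((nat \<Rightarrow> nat option) \<Rightarrow>\<^sub>0 nat) \<Rightarrow>\<^sub>0 'k::comm_ring_1" where
  "section_defect n a D \<sigma> = var \<sigma> - poly_subst (good_expansion n a D) (xsum n a \<sigma>)"

lemma section_defect_remove_coordinate: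
  assumes sc: "simplicial_complex n D" and \<sigma>: "\<sigma> \<in> Svars n a D" and \<sigma>j: "\<sigma> j = Some (a j)"
  shows "(section_defect n a D \<sigma> :: _ \<Rightarrow>\<^sub>0 'k::comm_ring_1)
      = gen_form n a D (dom \<sigma>) (dom \<sigma> - {j}) (\<lambda>k. the (\<sigma> k))
      - (\<Sum>t\<in>{1..<a j}. section_defect n a D (\<sigma>(j := Some t))) + section_defect n a D (\<sigma>(j := None))"
proof -
  let ?g = "gen_form n a D (dom \<sigma>) (dom \<sigma> - {j}) (\<lambda>k. the (\<sigma> k)) :: _ \<Rightarrow>\<^sub>0 'k"
  let ?d = "section_defect n a D :: _ \<Rightarrow> _ \<Rightarrow>\<^sub>0 'k"
  have "a j > 0"
    using \<sigma> \<sigma>j by (auto dest: Svars_SomeD)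
  then have range: "{1..a j} = insert (a j) {1..<a j}"
    by auto
  have "dom \<sigma> \<in> D" "dom \<sigma> - {j} \<in> D"
    using sc \<sigma> by (auto simp: Svars_def dom_def simplicial_complex_def)
  then have "?g = ?g - poly_subst (good_expansion n a D) (tau n a ?g)"
    using sc by (simp add: tau_gen_form)
  also have "\<dots> = (\<Sum>t\<in>{1..a j}. ?d (\<sigma>(j := Some t))) - ?d (\<sigma>(j := None))"
    using sc \<sigma> \<sigma>j
    by (simp add: gen_form_remove_coordinate tau_eq_poly_subst poly_subst_diff poly_subst_sum
        section_defect_def sum_subtractf)
  also have "\<dots> = ?d \<sigma> + (\<Sum>t\<in>{1..<a j}. ?d (\<sigma>(j := Some t))) - ?d (\<sigma>(j := None))"
    using \<sigma>j unfolding range by (simp add: fun_upd_idem)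
  finally show ?thesis
    by (simp add: algebra_simps)
qed

definition max_coords :: "nat \<Rightarrow> (nat \<Rightarrow> nat) \<Rightarrow> (nat \<Rightarrow> nat option) \<Rightarrow> nat set" where
  "max_coords n a \<sigma> = {j\<in>{1..n}. \<sigma> j = Some (a j)}"

lemma card_max_coords_update_less:
  assumes "j \<in> max_coords n a \<sigma>" "v \<noteq> Some (a j)"
  shows "card (max_coords n a (\<sigma>(j := v))) < card (max_coords n a \<sigma>)"
proof -
  have "max_coords n a (\<sigma>(j := v)) = max_coords n a \<sigma> - {j}"
    using assms(2) by (auto simp: max_coords_def)
  moreover have "finite (max_coords n a \<sigma>)"
    by (simp add: max_coords_def)
  ultimately show ?thesis
    using card_Diff1_less[OF _ assms(1)] by simp
qed

lemma section_defect_in_ideal_gen: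
  assumes sc: "simplicial_complex n D" and apos: "\<forall>j\<in>{1..n}. a j > 0"
    and "\<sigma> \<in> Svars n a D"
  shows "section_defect n a D \<sigma>
      \<in> ideal_gen (S_ring n a D) (generators n a D :: (_ \<Rightarrow>\<^sub>0 'k::comm_ring_1) set)"
  using assms(3)
proof (induction "card (max_coords n a \<sigma>)" arbitrary: \<sigma> rule: less_induct)
  case less
  let ?I = "ideal_gen (S_ring n a D) (generators n a D :: (_ \<Rightarrow>\<^sub>0 'k) set)"
  show ?case
  proof (cases "\<sigma> \<in> good_tuples n a D")
    case True
    then show ?thesis
      using apos by (simp add: section_defect_def poly_subst_good_expansion_xsum)
  next
    case False
    then obtain j where \<sigma>j: "\<sigma> j = Some (a j)"
      using less.prems by (auto simp: good_tuples_def)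
    then have j: "j \<in> max_coords n a \<sigma>"
      using less.prems by (auto simp: max_coords_def dest: Svars_SomeD)
    have "gen_form n a D (dom \<sigma>) (dom \<sigma> - {j}) (\<lambda>k. the (\<sigma> k)) \<in> ?I"
      using sc less.prems
      by (intro S_ring.generator_in_ideal_gen gen_form_remove_coordinate_in_generators)
    moreover have "section_defect n a D (\<sigma>(j := Some t)) \<in> ?I" if "t \<in> {1..<a j}" for t
      using that less.prems \<sigma>j
      by (intro less.hyps[OF card_max_coords_update_less[OF j]] Svars_update_Some) auto
    moreover have "section_defect n a D (\<sigma>(j := None)) \<in> ?I"
      using less.prems sc
      by (intro less.hyps[OF card_max_coords_update_less[OF j]] Svars_update_None) auto
    ultimately show ?thesis
      unfolding section_defect_remove_coordinate[OF sc less.prems \<sigma>j]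
      by (intro S_ring.ideal_gen_add S_ring.ideal_gen_diff S_ring.ideal_gen_sum)
  qed
qed

lemma tau_ideal_gen_generators:
  assumes "simplicial_complex n D" "p \<in> ideal_gen A (generators n a D)"
  shows "tau n a p = 0"
proof -
  obtain F h where "p = (\<Sum>g\<in>F. h g * g)" "F \<subseteq> generators n a D"
    using assms(2) unfolding ideal_gen_def by blast
  moreover have "tau n a g = 0" if "g \<in> generators n a D" for g
    using that assms(1) by (auto simp: generators_def tau_gen_form)
  ultimately show ?thesis
    by (force simp: tau_eq_poly_subst poly_subst_sum poly_subst_mult intro!: sum.neutral)
qed

theorem proposition3p2:
  fixes n :: nat and a :: "nat \<Rightarrow> nat" and \<Delta> :: "nat set set"
  assumes "\<forall>j\<in>{1..n}. a j > 0"
    and "simplicial_complex n \<Delta>"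
  shows "{p \<in> (S_ring n a \<Delta> :: (((nat \<Rightarrow> nat option) \<Rightarrow>\<^sub>0 nat) \<Rightarrow>\<^sub>0 'k::field) set).
            tau n a p = 0}
         = ideal_gen (S_ring n a \<Delta>) (generators n a \<Delta>)"
proof (intro equalityI subsetI)
  fix p :: "_ \<Rightarrow>\<^sub>0 'k"
  assume "p \<in> {p \<in> S_ring n a \<Delta>. tau n a p = 0}"
  then have p: "p \<in> S_ring n a \<Delta>" "tau n a p = 0"
    by auto
  let ?section = "\<lambda>\<sigma>. poly_subst (good_expansion n a \<Delta>) (xsum n a \<sigma>)"
  have "p - poly_subst ?section p \<in> ideal_gen (S_ring n a \<Delta>) (generators n a \<Delta>)"
    using p(1) generators_subset_S_ring
      section_defect_in_ideal_gen[OF assms(2,1), unfolded section_defect_def]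
    by (rule S_ring_diff_poly_subst_in_ideal_gen)
  moreover have "poly_subst ?section p = poly_subst (good_expansion n a \<Delta>) (tau n a p)"
    by (simp add: tau_eq_poly_subst poly_subst_poly_subst)
  ultimately show "p \<in> ideal_gen (S_ring n a \<Delta>) (generators n a \<Delta>)"
    using p(2) by simp
next
  fix p :: "_ \<Rightarrow>\<^sub>0 'k"
  assume "p \<in> ideal_gen (S_ring n a \<Delta>) (generators n a \<Delta>)"
  then show "p \<in> {p \<in> S_ring n a \<Delta>. tau n a p = 0}"
    using S_ring.ideal_gen_subset[OF generators_subset_S_ring] tau_ideal_gen_generators[OF assms(2)]
    by blast
qed

end
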